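(* Let $X$ be a Fréchet space and $T$ a continuous linear operator on $X$ whose set of periodic points $\mathrm{Per}(T)=\{x\in X:T^nx=x\text{ for some }n\ge1\}$ is dense in $X$. Then $T$ is hyper-recurrent and $\mathrm{Hr}(T)$ is dense in $X$.
   Context: For a continuous linear operator $T$ on a Fréchet space $X$: $x$ is recurrent if $T^{\omega_n}x\to x$ for some strictly increasing sequence $(\omega_n)$ of positive integers; $\mathrm{Rec}(T)$ is the set of recurrent vectors and $T$ is recurrent if $\mathrm{Rec}(T)$ is dense. $\mathfrak{C}$ is the set of strictly increasing sequences $\omega$ with $T^{\omega_n}x\to x$ for some $x\ne0$; $\mathfrak{L}(\omega)=\{x:T^{\omega_n}x\to x\}$. $\mathrm{Hr}(T)$ is the set of $x\in\mathrm{Rec}(T)$ such that $\mathfrak{L}(\omega)$ is dense for every $\omega\in\mathfrak{C}$ with $x\in\mathfrak{L}(\omega)$; a recurrent $T$ is hyper-recurrent if $\mathrm{Hr}(T)\ne\emptyset$. *)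

theory Defs
  imports "HOL-Analysis.Analysis"
begin

definition frechet_space :: "'a::{real_vector, complete_space} itself \<Rightarrow> bool" where
  "frechet_space _ \<longleftrightarrow>
     (\<forall>x y z :: 'a. dist (x + z) (y + z) = dist x y) \<and>
     continuous_on UNIV (\<lambda>(x :: 'a, y :: 'a). x + y) \<and>
     continuous_on UNIV (\<lambda>(a :: real, x :: 'a). a *\<^sub>R x) \<and>
     (\<forall>U :: 'a set. open U \<and> 0 \<in> U \<longrightarrow> (\<exists>V. open V \<and> convex V \<and> 0 \<in> V \<and> V \<subseteq> U))"

definition Per :: "('a \<Rightarrow> 'a) \<Rightarrow> 'a set" where
  "Per T = {x. \<exists>n::nat. n \<ge> 1 \<and> (T ^^ n) x = x}"

definition L :: "('a::topological_space \<Rightarrow> 'a) \<Rightarrow> (nat \<Rightarrow> nat) \<Rightarrow> 'a set" where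
  "L T \<omega> = {x. (\<lambda>n. (T ^^ \<omega> n) x) \<longlonglongrightarrow> x}"

definition Rec :: "('a::topological_space \<Rightarrow> 'a) \<Rightarrow> 'a set" where
  "Rec T = {x. \<exists>\<omega>. strict_mono \<omega> \<and> (\<forall>n. 0 < \<omega> n) \<and> x \<in> L T \<omega>}"

definition recurrent :: "('a::topological_space \<Rightarrow> 'a) \<Rightarrow> bool" where
  "recurrent T \<longleftrightarrow> closure (Rec T) = UNIV"

definition frakC :: "('a::{topological_space,zero} \<Rightarrow> 'a) \<Rightarrow> (nat \<Rightarrow> nat) set" where
  "frakC T = {\<omega>. strict_mono \<omega> \<and> (\<forall>n. 0 < \<omega> n) \<and> (\<exists>x. x \<noteq> 0 \<and> x \<in> L T \<omega>)}"

definition Hr :: "('a::{topological_space,zero} \<Rightarrow> 'a) \<Rightarrow> 'a set" where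
  "Hr T = {x \<in> Rec T. \<forall>\<omega> \<in> frakC T. x \<in> L T \<omega> \<longrightarrow> closure (L T \<omega>) = UNIV}"

definition hyper_recurrent :: "('a::{topological_space,zero} \<Rightarrow> 'a) \<Rightarrow> bool" where
  "hyper_recurrent T \<longleftrightarrow> recurrent T \<and> Hr T \<noteq> {}"

end

theory Submission
  imports Defs
begin

text \<open>Starting from a periodic point close to a given vector, add ever smaller multiples of
  periodic points, each time choosing the scalar (all but finitely many work) so that the sum is
  again periodic, with period the lcm of the two periods, and so that the whole orbit moves by at
  most \<open>\<eta>\<^sub>k\<^sub>+\<^sub>1\<close>. The periods \<open>N\<^sub>k\<close> then form a divisibility chain in which every period
  \<open>q\<close> of a periodic point divides \<open>N\<^sub>q\<close>, and \<open>\<eta>\<^sub>k\<^sub>+\<^sub>1\<close> is chosen small against the distance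
  from \<open>s\<^sub>k\<close> to the other points of its orbit. The limit \<open>x\<close> shadows every orbit of \<open>s\<^sub>k\<close>, so
  \<open>T\<^sup>m x\<close> is close to \<open>x\<close> when \<open>N\<^sub>k\<close> divides \<open>m\<close> and far from \<open>x\<close> when \<open>T\<^sup>m s\<^sub>k \<noteq> s\<^sub>k\<close>.
  The first fact makes \<open>x\<close> recurrent along \<open>(k + 1) N\<^sub>k\<close>; the second shows that
  \<open>T\<^sup>\<omega>\<^sup>n x \<rightarrow> x\<close> forces \<open>N\<^sub>q\<close>, hence \<open>q\<close>, to divide \<open>\<omega>\<^sub>n\<close> eventually, so that
  \<open>L(\<omega>)\<close> contains every periodic point and is dense.\<close>

definition minimal_period :: "('a \<Rightarrow> 'a) \<Rightarrow> 'a \<Rightarrow> nat \<Rightarrow> bool" where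
  "minimal_period T v N \<longleftrightarrow> 0 < N \<and> (\<forall>m. (T ^^ m) v = v \<longleftrightarrow> N dvd m)"

lemma minimal_periodI:
  assumes "0 < N" and "(T ^^ N) v = v" and "\<And>r. 0 < r \<Longrightarrow> r < N \<Longrightarrow> (T ^^ r) v \<noteq> v"
  shows "minimal_period T v N"
  unfolding minimal_period_def
proof (intro conjI allI iffI)
  fix m
  assume "(T ^^ m) v = v"
  then have "(T ^^ (m mod N)) v = v"
    by (simp add: funpow_mod_eq[OF assms(2)])
  then have "m mod N = 0"
    using assms(3)[of "m mod N"] mod_less_divisor[OF assms(1)] by auto
  then show "N dvd m" by auto
next
  fix m
  assume "N dvd m"
  then show "(T ^^ m) v = v"
    using funpow_mod_eq[OF assms(2), of m] by simp
qed (fact assms(1))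

lemma minimal_period_pos: "minimal_period T v N \<Longrightarrow> 0 < N"
  by (simp add: minimal_period_def)

lemma minimal_period_funpow_eq_iff: "minimal_period T v N \<Longrightarrow> (T ^^ m) v = v \<longleftrightarrow> N dvd m"
  by (simp add: minimal_period_def)

lemma minimal_period_exists:
  assumes "v \<in> Per T"
  obtains N where "minimal_period T v N"
proof -
  define N where "N = (LEAST n. 0 < n \<and> (T ^^ n) v = v)"
  have "\<exists>n. 0 < n \<and> (T ^^ n) v = v"
    using assms unfolding Per_def by (auto simp: Suc_le_eq)
  then have "0 < N \<and> (T ^^ N) v = v"
    unfolding N_def by (rule LeastI_ex)
  moreover have "(T ^^ r) v \<noteq> v" if "0 < r" "r < N" for r
    using not_less_Least[of r "\<lambda>n. 0 < n \<and> (T ^^ n) v = v"] that unfolding N_def by auto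
  ultimately show ?thesis
    by (intro that minimal_periodI) auto
qed

text \<open>The \<open>1\<close> keeps the minimum well defined when \<open>v\<close> is a fixed point.\<close>

definition orbit_gap :: "('a::metric_space \<Rightarrow> 'a) \<Rightarrow> 'a \<Rightarrow> nat \<Rightarrow> real" where
  "orbit_gap T v N = Min (insert 1 ((\<lambda>r. dist ((T ^^ r) v) v) ` {r. r < N \<and> (T ^^ r) v \<noteq> v}))"

lemma orbit_gap_pos: "0 < orbit_gap T v N"
proof -
  show ?thesis
    unfolding orbit_gap_def by (subst Min_gr_iff) auto
qed

lemma orbit_gap_le:
  assumes "0 < N" and "(T ^^ N) v = v" and "(T ^^ m) v \<noteq> v"
  shows "orbit_gap T v N \<le> dist ((T ^^ m) v) v"
proof -
  have "(T ^^ m) v = (T ^^ (m mod N)) v"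
    by (simp add: funpow_mod_eq[OF assms(2)])
  then have "dist ((T ^^ m) v) v \<in> (\<lambda>r. dist ((T ^^ r) v) v) ` {r. r < N \<and> (T ^^ r) v \<noteq> v}"
    using assms(1,3) by (intro image_eqI[of _ _ "m mod N"]) auto
  then show ?thesis
    unfolding orbit_gap_def by (intro Min_le) auto
qed

lemma continuous_on_funpow:
  fixes f :: "'a::topological_space \<Rightarrow> 'a"
  assumes "continuous_on UNIV f"
  shows "continuous_on UNIV (f ^^ n)"
proof (induction n)
  case (Suc n)
  then show ?case
    using continuous_on_compose[OF Suc.IH continuous_on_subset[OF assms subset_UNIV]] by simp
qed simp

lemma linear_funpow:
  fixes f :: "'a::real_vector \<Rightarrow> 'a"
  assumes "linear f"
  shows "linear (f ^^ n)"
proof (induction n)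
  case (Suc n)
  then show ?case
    using linear_compose[OF Suc.IH assms] by (simp only: funpow.simps(2))
qed (auto intro: linearI)

lemma dist_le_of_halving_steps:
  fixes f :: "nat \<Rightarrow> 'a::metric_space"
  assumes step: "\<And>k. dist (f (Suc k)) (f k) \<le> \<eta> (Suc k)"
    and halving: "\<And>k. \<eta> (Suc k) \<le> \<eta> k / 2"
    and "k \<le> j"
  shows "dist (f j) (f k) \<le> 2 * \<eta> (Suc k)"
proof -
  have tail: "dist (f (k + d)) (f k) \<le> 2 * \<eta> (Suc k) - 2 * \<eta> (Suc (k + d))" for d
  proof (induction d)
    case (Suc d)
    have "dist (f (k + Suc d)) (f k) \<le> dist (f (Suc (k + d))) (f (k + d)) + dist (f (k + d)) (f k)"
      by (simp add: dist_triangle)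
    with Suc step[of "k + d"] halving[of "Suc (k + d)"] show ?case
      by simp
  qed simp
  obtain d where "j = k + d"
    using \<open>k \<le> j\<close> le_Suc_ex by blast
  moreover have "0 \<le> \<eta> (Suc (k + d))"
    using step[of "k + d"] zero_le_dist order_trans by blast
  ultimately show ?thesis
    using tail[of d] by simp
qed

lemma uniformly_small_scalings:
  fixes V :: "'a::{real_vector, metric_space} set"
  assumes "\<And>v::'a. continuous_on UNIV (\<lambda>t::real. t *\<^sub>R v)" and "finite V" and "0 < \<epsilon>"
  shows "\<exists>\<tau>>0. \<forall>t. \<bar>t\<bar> < \<tau> \<longrightarrow> (\<forall>v\<in>V. dist (t *\<^sub>R v) 0 < \<epsilon>)"
proof -
  have "\<forall>\<^sub>F t in at 0. dist (t *\<^sub>R v) 0 < \<epsilon>" for v :: 'a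
  proof -
    have "((\<lambda>t::real. t *\<^sub>R v) \<longlongrightarrow> 0 *\<^sub>R v) (at 0)"
      using assms(1)[of v] by (simp add: continuous_on_def) (metis scale_zero_left)
    then show ?thesis
      using assms(3) by (simp add: tendstoD)
  qed
  then have "\<forall>\<^sub>F t in at 0. \<forall>v\<in>V. dist (t *\<^sub>R v) 0 < \<epsilon>"
    using assms(2) by (simp add: eventually_ball_finite)
  then obtain \<tau> where "0 < \<tau>"
    and \<tau>: "\<And>t. t \<noteq> 0 \<Longrightarrow> \<bar>t\<bar> < \<tau> \<Longrightarrow> \<forall>v\<in>V. dist (t *\<^sub>R v) 0 < \<epsilon>"
    by (auto simp: eventually_at dist_real_def)
  have "\<forall>v\<in>V. dist (t *\<^sub>R v) 0 < \<epsilon>" if "\<bar>t\<bar> < \<tau>" for t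
    using \<tau>[OF _ that] assms(3) by (cases "t = 0") auto
  with \<open>0 < \<tau>\<close> show ?thesis
    by blast
qed

lemma finite_exceptional_scalars:
  fixes T :: "'a::real_vector \<Rightarrow> 'a"
  assumes "linear T" and "minimal_period T s a" and "minimal_period T w q"
  shows "finite {t. \<exists>r. 0 < r \<and> r < lcm a q \<and> (T ^^ r) (s + t *\<^sub>R w) = s + t *\<^sub>R w}"
proof -
  have unique: "t = t'"
    if "0 < r" "r < lcm a q" and fixed: "(T ^^ r) (s + t *\<^sub>R w) = s + t *\<^sub>R w"
      "(T ^^ r) (s + t' *\<^sub>R w) = s + t' *\<^sub>R w" for r t t'
  proof (rule ccontr)
    assume "t \<noteq> t'"
    have lin: "linear (T ^^ r)"
      by (rule linear_funpow[OF assms(1)])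
    have "(T ^^ r) s + t *\<^sub>R (T ^^ r) w = s + t *\<^sub>R w"
      and "(T ^^ r) s + t' *\<^sub>R (T ^^ r) w = s + t' *\<^sub>R w"
      using fixed by (simp_all add: linear_add[OF lin] linear_scale[OF lin])
    then have "((T ^^ r) s + t *\<^sub>R (T ^^ r) w) - ((T ^^ r) s + t' *\<^sub>R (T ^^ r) w)
        = (s + t *\<^sub>R w) - (s + t' *\<^sub>R w)"
      by simp
    then have "(t - t') *\<^sub>R (T ^^ r) w = (t - t') *\<^sub>R w"
      by (simp add: scaleR_diff_left)
    then have "(T ^^ r) w = w"
      using \<open>t \<noteq> t'\<close> by simp
    moreover from this have "(T ^^ r) s = s"
      using \<open>(T ^^ r) s + t *\<^sub>R (T ^^ r) w = s + t *\<^sub>R w\<close> by simp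
    ultimately have "a dvd r" and "q dvd r"
      using assms(2,3) by (simp_all add: minimal_period_funpow_eq_iff)
    then have "lcm a q dvd r"
      by (rule lcm_least)
    then show False
      using nat_dvd_not_less[OF that(1,2)] by blast
  qed
  have "finite {t. (T ^^ r) (s + t *\<^sub>R w) = s + t *\<^sub>R w}" if "0 < r" "r < lcm a q" for r
  proof (cases "\<exists>t. (T ^^ r) (s + t *\<^sub>R w) = s + t *\<^sub>R w")
    case True
    then obtain t where "(T ^^ r) (s + t *\<^sub>R w) = s + t *\<^sub>R w" ..
    then have "{t. (T ^^ r) (s + t *\<^sub>R w) = s + t *\<^sub>R w} \<subseteq> {t}"
      using unique[OF that] by blast
    then show ?thesis
      using finite_subset by blast
  qed simp
  moreover have "{t. \<exists>r. 0 < r \<and> r < lcm a q \<and> (T ^^ r) (s + t *\<^sub>R w) = s + t *\<^sub>R w}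
      = (\<Union>r\<in>{0<..<lcm a q}. {t. (T ^^ r) (s + t *\<^sub>R w) = s + t *\<^sub>R w})"
    by auto
  ultimately show ?thesis
    by simp
qed

lemma exists_small_periodic_perturbation:
  fixes T :: "'a::{real_vector, metric_space} \<Rightarrow> 'a"
  assumes dist_add_right: "\<And>x y z::'a. dist (x + z) (y + z) = dist x y"
    and scaling_continuous: "\<And>v::'a. continuous_on UNIV (\<lambda>t::real. t *\<^sub>R v)"
    and "linear T" and s: "minimal_period T s a" and w: "minimal_period T w q" and "0 < \<epsilon>"
  shows "\<exists>t. minimal_period T (s + t *\<^sub>R w) (lcm a q) \<and>
    (\<forall>m. dist ((T ^^ m) (s + t *\<^sub>R w)) ((T ^^ m) s) \<le> \<epsilon>)"
proof -
  have "0 < a" "0 < q"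
    using s w by (simp_all add: minimal_period_pos)
  obtain \<tau> where "0 < \<tau>" and \<tau>: "\<And>t r. \<bar>t\<bar> < \<tau> \<Longrightarrow> r < q \<Longrightarrow> dist (t *\<^sub>R (T ^^ r) w) 0 < \<epsilon>"
    using uniformly_small_scalings[OF scaling_continuous, of "(\<lambda>r. (T ^^ r) w) ` {..<q}" \<epsilon>] \<open>0 < \<epsilon>\<close> by auto
  define E where "E = {t. \<exists>r. 0 < r \<and> r < lcm a q \<and> (T ^^ r) (s + t *\<^sub>R w) = s + t *\<^sub>R w}"
  have "finite E"
    unfolding E_def using assms(3) s w by (rule finite_exceptional_scalars)
  then have "infinite ({0<..<\<tau>} - E)"
    using \<open>0 < \<tau>\<close> by (intro Diff_infinite_finite) auto
  then have "{0<..<\<tau>} - E \<noteq> {}"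
    by (rule infinite_imp_nonempty)
  then obtain t where t: "t \<in> {0<..<\<tau>}" "t \<notin> E"
    by blast
  have orbit: "(T ^^ m) (s + t *\<^sub>R w) = (T ^^ m) s + t *\<^sub>R (T ^^ m) w" for m
    using linear_funpow[OF assms(3)] by (simp add: linear_add linear_scale)
  have "minimal_period T (s + t *\<^sub>R w) (lcm a q)"
  proof (rule minimal_periodI)
    show "0 < lcm a q"
      using \<open>0 < a\<close> \<open>0 < q\<close> by (simp add: lcm_pos_nat)
    have "(T ^^ lcm a q) s = s" and "(T ^^ lcm a q) w = w"
      using s w by (simp_all add: minimal_period_funpow_eq_iff)
    then show "(T ^^ lcm a q) (s + t *\<^sub>R w) = s + t *\<^sub>R w"
      by (simp add: orbit)
    show "(T ^^ r) (s + t *\<^sub>R w) \<noteq> s + t *\<^sub>R w" if "0 < r" "r < lcm a q" for r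
      using t(2) that unfolding E_def by blast
  qed
  moreover have "dist ((T ^^ m) (s + t *\<^sub>R w)) ((T ^^ m) s) \<le> \<epsilon>" for m
  proof -
    have w_orbit: "(T ^^ m) w = (T ^^ (m mod q)) w"
      using funpow_mod_eq[where f = T and n = q and x = w] by (simp add: minimal_period_funpow_eq_iff[OF w])
    have "dist ((T ^^ m) (s + t *\<^sub>R w)) ((T ^^ m) s) = dist (t *\<^sub>R (T ^^ m) w + (T ^^ m) s) (0 + (T ^^ m) s)"
      by (simp add: orbit add.commute)
    also have "\<dots> = dist (t *\<^sub>R (T ^^ m) w) 0"
      by (rule dist_add_right)
    also have "\<dots> < \<epsilon>"
      unfolding w_orbit using t(1) \<open>0 < q\<close> by (intro \<tau>) auto
    finally show ?thesis
      by simp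
  qed
  ultimately show ?thesis
    by blast
qed

locale periodic_approximation =
  fixes T :: "'a::{complete_space, zero} \<Rightarrow> 'a"
    and s :: "nat \<Rightarrow> 'a" and N :: "nat \<Rightarrow> nat" and \<eta> :: "nat \<Rightarrow> real"
  assumes continuous: "continuous_on UNIV T"
    and period: "minimal_period T (s k) (N k)"
    and period_dvd_Suc: "N k dvd N (Suc k)"
    and period_dvd_N: "minimal_period T y q \<Longrightarrow> q dvd N q"
    and eta_halving: "\<eta> (Suc k) \<le> \<eta> k / 2"
    and eta_le_orbit_gap: "8 * \<eta> (Suc k) \<le> orbit_gap T (s k) (N k)"
    and orbit_step_le: "dist ((T ^^ m) (s (Suc k))) ((T ^^ m) (s k)) \<le> \<eta> (Suc k)"
begin

lemma orbit_dist_le: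
  assumes "k \<le> j"
  shows "dist ((T ^^ m) (s j)) ((T ^^ m) (s k)) \<le> 2 * \<eta> (Suc k)"
  using orbit_step_le eta_halving assms by (rule dist_le_of_halving_steps)

lemma eta_nonneg: "0 \<le> \<eta> k"
proof -
  have Suc_nonneg: "0 \<le> \<eta> (Suc k)" for k
    by (rule order_trans[OF zero_le_dist orbit_step_le])
  show ?thesis
  proof (cases k)
    case 0
    then show ?thesis
      using eta_halving[of 0] Suc_nonneg[of 0] by simp
  qed (simp add: Suc_nonneg)
qed

lemma eta_tendsto_zero: "\<eta> \<longlonglongrightarrow> 0"
proof (rule tendsto_sandwich[where f = "\<lambda>_. 0" and h = "\<lambda>k. \<eta> 0 * (1/2) ^ k"])
  have "\<eta> k \<le> \<eta> 0 * (1/2) ^ k" for k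
  proof (induction k)
    case (Suc k)
    then show ?case
      using eta_halving[of k] by simp
  qed simp
  then show "\<forall>\<^sub>F k in sequentially. \<eta> k \<le> \<eta> 0 * (1/2) ^ k"
    by simp
  show "(\<lambda>k. \<eta> 0 * (1/2) ^ k) \<longlonglongrightarrow> 0"
    by (intro tendsto_mult_right_zero LIMSEQ_realpow_zero) auto
qed (auto simp: eta_nonneg)

lemma Cauchy_approximations: "Cauchy s"
proof (rule metric_CauchyI)
  fix e :: real
  assume "0 < e"
  then obtain M where M: "\<And>n. M \<le> n \<Longrightarrow> \<eta> n < e / 4"
    using order_tendstoD(2)[OF eta_tendsto_zero, of "e / 4"] by (auto simp: eventually_sequentially)
  have "dist (s m) (s n) < e" if "M \<le> m" "M \<le> n" for m n
  proof -
    have "dist (s m) (s n) \<le> dist (s m) (s M) + dist (s n) (s M)"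
      by (rule dist_triangle2)
    also have "\<dots> \<le> 4 * \<eta> (Suc M)"
      using orbit_dist_le[OF that(1), of 0] orbit_dist_le[OF that(2), of 0] by simp
    also have "\<dots> < e"
      using M[of "Suc M"] by simp
    finally show ?thesis .
  qed
  then show "\<exists>M. \<forall>m\<ge>M. \<forall>n\<ge>M. dist (s m) (s n) < e"
    by blast
qed

lemma approximations_tendsto: "s \<longlonglongrightarrow> lim s"
  using Cauchy_approximations by (simp add: Cauchy_convergent_iff convergent_LIMSEQ_iff)

lemma orbit_dist_lim_le: "dist ((T ^^ m) (lim s)) ((T ^^ m) (s k)) \<le> 2 * \<eta> (Suc k)"
proof -
  have "(\<lambda>j. (T ^^ m) (s j)) \<longlonglongrightarrow> (T ^^ m) (lim s)"
    by (rule continuous_on_tendsto_compose[OF continuous_on_funpow[OF continuous] approximations_tendsto])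
      auto
  moreover have "\<forall>\<^sub>F j in sequentially. dist ((T ^^ m) (s k)) ((T ^^ m) (s j)) \<le> 2 * \<eta> (Suc k)"
    by (rule eventually_sequentiallyI[of k]) (simp add: dist_commute[of "(T ^^ m) (s k)"] orbit_dist_le)
  ultimately have "dist ((T ^^ m) (s k)) ((T ^^ m) (lim s)) \<le> 2 * \<eta> (Suc k)"
    by (intro Lim_dist_ubound) auto
  then show ?thesis
    by (simp add: dist_commute)
qed

lemma return_dist_le:
  assumes "N k dvd m"
  shows "dist ((T ^^ m) (lim s)) (lim s) \<le> 4 * \<eta> (Suc k)"
proof -
  have "(T ^^ m) (s k) = s k"
    using assms by (simp add: minimal_period_funpow_eq_iff[OF period])
  moreover have "dist ((T ^^ m) (lim s)) (lim s) \<le> dist ((T ^^ m) (lim s)) (s k) + dist (lim s) (s k)"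
    by (rule dist_triangle2)
  ultimately show ?thesis
    using orbit_dist_lim_le[of m k] orbit_dist_lim_le[of 0 k] by simp
qed

lemma return_dist_ge:
  assumes "(T ^^ m) (s k) \<noteq> s k"
  shows "orbit_gap T (s k) (N k) / 2 \<le> dist ((T ^^ m) (lim s)) (lim s)"
proof -
  have "orbit_gap T (s k) (N k) \<le> dist ((T ^^ m) (s k)) (s k)"
    using assms by (intro orbit_gap_le minimal_period_pos[OF period])
      (simp_all add: minimal_period_funpow_eq_iff[OF period])
  also have "\<dots> \<le> dist ((T ^^ m) (s k)) ((T ^^ m) (lim s)) + dist ((T ^^ m) (lim s)) (lim s) + dist (lim s) (s k)"
    using dist_triangle[of "(T ^^ m) (s k)" "s k" "(T ^^ m) (lim s)"]
      dist_triangle[of "(T ^^ m) (lim s)" "s k" "lim s"] by linarith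
  also have "\<dots> \<le> 4 * \<eta> (Suc k) + dist ((T ^^ m) (lim s)) (lim s)"
    using orbit_dist_lim_le[of m k] orbit_dist_lim_le[of 0 k] by (simp add: dist_commute)
  finally show ?thesis
    using eta_le_orbit_gap[of k] by simp
qed

lemma lim_in_Rec: "lim s \<in> Rec T"
proof -
  define \<omega> where "\<omega> n = Suc n * N n" for n
  have N_pos: "0 < N n" for n
    by (rule minimal_period_pos[OF period])
  have "strict_mono \<omega>"
  proof (rule strict_monoI_Suc)
    fix n
    have "N n \<le> N (Suc n)"
      using period_dvd_Suc N_pos by (simp add: dvd_imp_le)
    then have "Suc n * N n < Suc (Suc n) * N (Suc n)"
      using N_pos[of n] by (intro mult_less_le_imp_less) auto
    then show "\<omega> n < \<omega> (Suc n)"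
      unfolding \<omega>_def .
  qed
  moreover have "0 < \<omega> n" for n
    using N_pos by (simp add: \<omega>_def)
  moreover have "(\<lambda>n. (T ^^ \<omega> n) (lim s)) \<longlonglongrightarrow> lim s"
    unfolding tendsto_dist_iff[of _ "lim s"]
  proof (rule tendsto_sandwich[where f = "\<lambda>_. 0" and h = "\<lambda>n. 4 * \<eta> (Suc n)"])
    show "\<forall>\<^sub>F n in sequentially. dist ((T ^^ \<omega> n) (lim s)) (lim s) \<le> 4 * \<eta> (Suc n)"
      by (intro always_eventually allI return_dist_le) (simp add: \<omega>_def)
    show "(\<lambda>n. 4 * \<eta> (Suc n)) \<longlonglongrightarrow> 0"
      using tendsto_mult_right_zero[OF LIMSEQ_Suc[OF eta_tendsto_zero]] by simp
  qed simp_all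
  ultimately show ?thesis
    unfolding Rec_def L_def by blast
qed

lemma Per_subset_L:
  assumes "lim s \<in> L T \<omega>"
  shows "Per T \<subseteq> L T \<omega>"
proof
  fix y
  assume "y \<in> Per T"
  then obtain q where q: "minimal_period T y q"
    by (rule minimal_period_exists)
  define g where "g = orbit_gap T (s q) (N q)"
  have "(\<lambda>n. (T ^^ \<omega> n) (lim s)) \<longlonglongrightarrow> lim s"
    using assms unfolding L_def by simp
  moreover have "0 < g / 2"
    by (simp add: g_def orbit_gap_pos)
  ultimately have "\<forall>\<^sub>F n in sequentially. dist ((T ^^ \<omega> n) (lim s)) (lim s) < g / 2"
    by (rule tendstoD)
  then have "\<forall>\<^sub>F n in sequentially. (T ^^ \<omega> n) y = y"
  proof (rule eventually_mono)
    fix n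
    assume "dist ((T ^^ \<omega> n) (lim s)) (lim s) < g / 2"
    then have "(T ^^ \<omega> n) (s q) = s q"
      using return_dist_ge[of "\<omega> n" q] unfolding g_def by linarith
    then have "N q dvd \<omega> n"
      by (simp add: minimal_period_funpow_eq_iff[OF period])
    with period_dvd_N[OF q] have "q dvd \<omega> n"
      by (rule dvd_trans)
    then show "(T ^^ \<omega> n) y = y"
      by (simp add: minimal_period_funpow_eq_iff[OF q])
  qed
  then show "y \<in> L T \<omega>"
    unfolding L_def by (simp add: tendsto_eventually)
qed

lemma lim_in_Hr:
  assumes "closure (Per T) = UNIV"
  shows "lim s \<in> Hr T"
proof -
  have "closure (L T \<omega>) = UNIV" if "lim s \<in> L T \<omega>" for \<omega>
    using closure_mono[OF Per_subset_L[OF that]] assms by auto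
  then show ?thesis
    using lim_in_Rec unfolding Hr_def by blast
qed

end

lemma exists_periodic_refinement:
  fixes T :: "'a::{real_vector, metric_space} \<Rightarrow> 'a"
  assumes dist_add_right: "\<And>x y z::'a. dist (x + z) (y + z) = dist x y"
    and scaling_continuous: "\<And>v::'a. continuous_on UNIV (\<lambda>t::real. t *\<^sub>R v)"
    and "linear T" and v: "minimal_period T v n" and "0 < e"
  shows "\<exists>v' n' e'. minimal_period T v' n' \<and> 0 < e' \<and> 8 * e' \<le> e \<and> 8 * e' \<le> orbit_gap T v n \<and>
    n dvd n' \<and> ((\<exists>w. minimal_period T w k) \<longrightarrow> k dvd n') \<and>
    (\<forall>m. dist ((T ^^ m) v') ((T ^^ m) v) \<le> e')"
proof -
  obtain w q where w: "minimal_period T w q" and q: "(\<exists>w. minimal_period T w k) \<longrightarrow> q = k"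
  proof (cases "\<exists>w. minimal_period T w k")
    case True
    then obtain w where "minimal_period T w k" ..
    then show ?thesis
      by (intro that[of w k]) simp_all
  next
    case False
    have "minimal_period T 0 1"
      using linear_0[OF assms(3)] by (intro minimal_periodI) auto
    then show ?thesis
      using False by (intro that[of 0 1]) simp_all
  qed
  define e' where "e' = min e (orbit_gap T v n) / 8"
  have "0 < e'"
    using \<open>0 < e\<close> orbit_gap_pos by (simp add: e'_def)
  then obtain t where "minimal_period T (v + t *\<^sub>R w) (lcm n q)"
    and "\<forall>m. dist ((T ^^ m) (v + t *\<^sub>R w)) ((T ^^ m) v) \<le> e'"
    using exists_small_periodic_perturbation[OF dist_add_right scaling_continuous assms(3) v w] by blast
  moreover have "8 * e' \<le> e" and "8 * e' \<le> orbit_gap T v n"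
    by (simp_all add: e'_def)
  ultimately show ?thesis
    using \<open>0 < e'\<close> q by (intro exI[of _ "v + t *\<^sub>R w"] exI[of _ "lcm n q"] exI[of _ e']) auto
qed

lemma exists_periodic_approximation:
  fixes T :: "'a::{real_vector, complete_space} \<Rightarrow> 'a"
  assumes dist_add_right: "\<And>x y z::'a. dist (x + z) (y + z) = dist x y"
    and scaling_continuous: "\<And>v::'a. continuous_on UNIV (\<lambda>t::real. t *\<^sub>R v)"
    and "linear T" and "continuous_on UNIV T" and "minimal_period T s\<^sub>0 N\<^sub>0" and "0 < \<eta>\<^sub>0"
  shows "\<exists>s N \<eta>. s 0 = s\<^sub>0 \<and> \<eta> 0 = \<eta>\<^sub>0 \<and> periodic_approximation T s N \<eta>"
proof -
  define P where "P k = (\<lambda>(v, n, e). minimal_period T v n \<and> 0 < e \<and> (k = 0 \<longrightarrow> v = s\<^sub>0 \<and> e = \<eta>\<^sub>0))"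
    for k :: nat
  define Q where "Q k = (\<lambda>(v, n, e) (v', n', e'). 8 * e' \<le> e \<and> 8 * e' \<le> orbit_gap T v n \<and> n dvd n' \<and>
      ((\<exists>w. minimal_period T w (Suc k)) \<longrightarrow> Suc k dvd n') \<and>
      (\<forall>m. dist ((T ^^ m) v') ((T ^^ m) v) \<le> e'))" for k :: nat
  have "\<exists>y. P (Suc k) y \<and> Q k x y" if "P k x" for k x
  proof -
    obtain v n e where x: "x = (v, n, e)"
      by (cases x)
    with that have "minimal_period T v n" and "0 < e"
      unfolding P_def by auto
    then have "\<exists>v' n' e'. P (Suc k) (v', n', e') \<and> Q k (v, n, e) (v', n', e')"
      unfolding P_def Q_def using exists_periodic_refinement[OF dist_add_right scaling_continuous assms(3)]
      by simp
    then show ?thesis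
      unfolding x by blast
  qed
  moreover have "P 0 (s\<^sub>0, N\<^sub>0, \<eta>\<^sub>0)"
    using assms(5,6) unfolding P_def by simp
  ultimately obtain f where f: "\<And>k. P k (f k) \<and> Q k (f k) (f (Suc k))"
    using dependent_nat_choice[of P Q] by blast
  define s N \<eta> where "s k = fst (f k)" and "N k = fst (snd (f k))" and "\<eta> k = snd (snd (f k))" for k
  have f_eq: "f k = (s k, N k, \<eta> k)" for k
    by (simp add: s_def N_def \<eta>_def)
  have P_k: "minimal_period T (s k) (N k) \<and> 0 < \<eta> k \<and> (k = 0 \<longrightarrow> s k = s\<^sub>0 \<and> \<eta> k = \<eta>\<^sub>0)" for k
    using f[of k] unfolding f_eq P_def by simp
  have Q_k: "8 * \<eta> (Suc k) \<le> \<eta> k \<and> 8 * \<eta> (Suc k) \<le> orbit_gap T (s k) (N k) \<and> N k dvd N (Suc k) \<and>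
      ((\<exists>w. minimal_period T w (Suc k)) \<longrightarrow> Suc k dvd N (Suc k)) \<and>
      (\<forall>m. dist ((T ^^ m) (s (Suc k))) ((T ^^ m) (s k)) \<le> \<eta> (Suc k))" for k
    using f[of k] unfolding f_eq Q_def by simp
  have "periodic_approximation T s N \<eta>"
  proof
    show "q dvd N q" if q: "minimal_period T y q" for y q
    proof -
      obtain k where "q = Suc k"
        using minimal_period_pos[OF q] gr0_implies_Suc by blast
      then show ?thesis
        using Q_k q by blast
    qed
    show "\<eta> (Suc k) \<le> \<eta> k / 2" for k
      using Q_k[of k] P_k[of "Suc k"] by linarith
  qed (use assms(4) P_k Q_k in simp_all)
  moreover have "s 0 = s\<^sub>0" and "\<eta> 0 = \<eta>\<^sub>0"
    using P_k[of 0] by simp_all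
  ultimately show ?thesis
    by blast
qed

lemma closure_Hr_eq_UNIV:
  fixes T :: "'a::{real_vector, complete_space} \<Rightarrow> 'a"
  assumes dist_add_right: "\<And>x y z::'a. dist (x + z) (y + z) = dist x y"
    and scaling_continuous: "\<And>v::'a. continuous_on UNIV (\<lambda>t::real. t *\<^sub>R v)"
    and "linear T" and "continuous_on UNIV T" and dense: "closure (Per T) = UNIV"
  shows "closure (Hr T) = UNIV"
proof -
  have "\<exists>x\<in>Hr T. dist x z < \<epsilon>" if \<epsilon>_pos: "0 < \<epsilon>" for z \<epsilon>
  proof -
    have "z \<in> closure (Per T)"
      using dense by simp
    then obtain s\<^sub>0 where "s\<^sub>0 \<in> Per T" and "dist s\<^sub>0 z < \<epsilon> / 2"
      using closure_approachable[THEN iffD1, rule_format, of z "Per T" "\<epsilon> / 2"] \<epsilon>_pos by auto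
    obtain N\<^sub>0 where "minimal_period T s\<^sub>0 N\<^sub>0"
      using \<open>s\<^sub>0 \<in> Per T\<close> by (rule minimal_period_exists)
    then obtain s N \<eta> where "s 0 = s\<^sub>0" and "\<eta> 0 = \<epsilon> / 4" and approx: "periodic_approximation T s N \<eta>"
      using exists_periodic_approximation[OF dist_add_right scaling_continuous assms(3,4), of s\<^sub>0 N\<^sub>0 "\<epsilon> / 4"]
        \<epsilon>_pos by auto
    interpret periodic_approximation T s N \<eta>
      by (fact approx)
    have "dist (lim s) s\<^sub>0 \<le> \<epsilon> / 4"
      using orbit_dist_lim_le[of 0 0] eta_halving[of 0] \<open>s 0 = s\<^sub>0\<close> \<open>\<eta> 0 = \<epsilon> / 4\<close> by simp
    then have "dist (lim s) z < \<epsilon>"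
      using \<open>dist s\<^sub>0 z < \<epsilon> / 2\<close> dist_triangle[of "lim s" z s\<^sub>0] \<epsilon>_pos by linarith
    then show ?thesis
      using lim_in_Hr[OF dense] by blast
  qed
  then show ?thesis
    by (auto simp: closure_approachable)
qed

theorem theorem5p13:
  fixes T :: "'a::{real_vector, complete_space} \<Rightarrow> 'a"
  assumes "frechet_space TYPE('a)"
    and "linear T"
    and "continuous_on UNIV T"
    and "closure (Per T) = UNIV"
  shows "hyper_recurrent T \<and> closure (Hr T) = UNIV"
proof -
  have dist_add_right: "\<And>x y z::'a. dist (x + z) (y + z) = dist x y"
    and joint: "continuous_on UNIV (\<lambda>(t::real, x::'a). t *\<^sub>R x)"
    using assms(1) by (simp_all add: frechet_space_def)
  have "continuous_on UNIV (\<lambda>t::real. t *\<^sub>R v)" for v :: 'a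
    using continuous_on_compose2[OF joint continuous_on_Pair[OF continuous_on_id continuous_on_const]]
    by simp
  then have Hr_dense: "closure (Hr T) = UNIV"
    by (rule closure_Hr_eq_UNIV[OF dist_add_right _ assms(2-4)])
  moreover have "closure (Rec T) = UNIV"
    using closure_mono[of "Hr T" "Rec T"] Hr_dense unfolding Hr_def by auto
  moreover have "Hr T \<noteq> {}"
    using Hr_dense by auto
  ultimately show ?thesis
    unfolding hyper_recurrent_def recurrent_def by blast
qed

end
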